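(* Let $q$ be a prime power, $h\geq 2$, and let $\mathcal{L}_1,\mathcal{L}_2$ be two disjoint blocking sets of $\mathrm{PG}(2,q^h)$, each projectively equivalent to $\{(x:\mathrm{Tr}_{q^h/q}(x):y): x\in\mathbb{F}_{q^h},\ y\in\mathbb{F}_q,\ (x,y)\neq(0,0)\}$. Then each point of $\mathcal{L}_1\cup\mathcal{L}_2$ is incident with at least $q^h-q^{h-1}-q^{h-2}$ lines meeting $\mathcal{L}_1\cup\mathcal{L}_2$ in exactly $2$ points. In particular, $\mathcal{L}_1\cup\mathcal{L}_2$ is a minimal double blocking set.
   Context: $\mathrm{Tr}_{q^h/q}(x)=x+x^q+\dots+x^{q^{h-1}}$. A $t$-fold blocking set is a point set meeting every line in at least $t$ points (double = 2-fold); it is minimal if it contains no smaller $t$-fold blocking set. *)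

theory Defs
  imports "HOL-Analysis.Analysis" "HOL-Computational_Algebra.Primes"
begin

definition pg_point :: "'a::field ^ 3 \<Rightarrow> ('a ^ 3) set" where
  "pg_point v = {c *s v | c. c \<noteq> 0}"

definition pg_points :: "('a::field ^ 3) set set" where
  "pg_points = {pg_point v | v. v \<noteq> 0}"

definition pg_line :: "'a::field ^ 3 \<Rightarrow> ('a ^ 3) set set" where
  "pg_line a = {pg_point v | v. v \<noteq> 0 \<and> (\<Sum>i\<in>UNIV. a $ i * v $ i) = 0}"

definition pg_lines :: "('a::field ^ 3) set set set" where
  "pg_lines = {pg_line a | a. a \<noteq> 0}"

definition t_fold_blocking_set :: "nat \<Rightarrow> ('a::field ^ 3) set set \<Rightarrow> bool" where
  "t_fold_blocking_set t B \<longleftrightarrow> B \<subseteq> pg_points \<and> (\<forall>l\<in>pg_lines. card (l \<inter> B) \<ge> t)"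

definition blocking_set :: "('a::field ^ 3) set set \<Rightarrow> bool" where
  "blocking_set B \<longleftrightarrow> t_fold_blocking_set 1 B"

definition double_blocking_set :: "('a::field ^ 3) set set \<Rightarrow> bool" where
  "double_blocking_set B \<longleftrightarrow> t_fold_blocking_set 2 B"

definition minimal_double_blocking_set :: "('a::field ^ 3) set set \<Rightarrow> bool" where
  "minimal_double_blocking_set B \<longleftrightarrow>
     double_blocking_set B \<and> (\<forall>B'. B' \<subset> B \<longrightarrow> \<not> double_blocking_set B')"

definition projectivity_image :: "'a::field ^ 3 ^ 3 \<Rightarrow> ('a ^ 3) set set \<Rightarrow> ('a ^ 3) set set" where
  "projectivity_image A S = (\<lambda>P. (\<lambda>v. A *v v) ` P) ` S"

definition proj_equivalent :: "('a::field ^ 3) set set \<Rightarrow> ('a ^ 3) set set \<Rightarrow> bool" where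
  "proj_equivalent S T \<longleftrightarrow> (\<exists>A::'a^3^3. invertible A \<and> projectivity_image A T = S)"

definition rel_trace :: "nat \<Rightarrow> nat \<Rightarrow> 'a::field \<Rightarrow> 'a" where
  "rel_trace q h x = (\<Sum>i<h. x ^ (q ^ i))"

text \<open>The set {(x : Tr(x) : y) : x in F_{q^h}, y in F_q, (x,y) \<noteq> (0,0)}; the subfield F_q
of F_{q^h} is {y. y^q = y}.\<close>

definition trace_blocking_set :: "nat \<Rightarrow> nat \<Rightarrow> ('a::field ^ 3) set set" where
  "trace_blocking_set q h =
     {pg_point (vector [x, rel_trace q h x, y]) | x y. y ^ q = y \<and> (x, y) \<noteq> (0, 0)}"

definition prime_power :: "nat \<Rightarrow> bool" where
  "prime_power q \<longleftrightarrow> (\<exists>p k. prime p \<and> k \<ge> 1 \<and> q = p ^ k)"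

end

(* The trace set T is the point set of the F_q-subspace {(x, Tr x, y)} of F_{q^h}^3, so a line
   meeting T in two points meets it in at least q + 1 points. Moreover |T| <= q^h + q^(h-1) + 1,
   and every point of T lies on at most q^(h-1) + 1 lines meeting T at least twice: an affine point
   because such a line also meets one of the q^(h-1) + 1 points of T at infinity, a point at
   infinity because every such line other than the line at infinity also passes through one of
   at most q^(h-1) prescribed affine points. These properties are projectively invariant, so they
   hold for L1 and L2.

   Let P be a point of L1. The q^h + 1 lines through P partition L2 and each of them meets L2;
   as a line meeting L2 twice meets it in at least q + 1 points, comparing with |L2| shows that at
   most q^(h-2) of them meet L2 twice. Discarding these and the at most q^(h-1) + 1 lines through P
   that meet L1 twice, every remaining line through P meets L1 and L2 exactly once. A point on a
   line meeting a double blocking set in exactly two points cannot be removed, whence minimality. *)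

theory Submission
  imports Defs
begin

section \<open>Points, lines and incidence\<close>

lemma scalar_product_3:
  "scalar_product a v = a$1 * v$1 + a$2 * v$2 + a$3 * v$3" for a v :: "'a::comm_semiring_1^3"
  by (simp add: scalar_product_def sum_3)

lemma scalar_product_commute: "scalar_product a v = scalar_product v a"
  for a v :: "'a::comm_semiring_1^3"
  by (simp add: scalar_product_3 mult.commute)

lemma scalar_product_smult_left: "scalar_product (c *s a) v = c * scalar_product a v"
  for a v :: "'a::comm_semiring_1^3"
  by (simp add: scalar_product_3 algebra_simps)

lemma scalar_product_smult_right: "scalar_product a (c *s v) = c * scalar_product a v"
  for a v :: "'a::comm_semiring_1^3"
  by (simp add: scalar_product_3 algebra_simps)

lemma scalar_product_add_left:
  "scalar_product (a + b) v = scalar_product a v + scalar_product b v"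
  for a b v :: "'a::comm_semiring_1^3"
  by (simp add: scalar_product_3 algebra_simps)

lemma scalar_product_axis: "scalar_product (axis i 1) v = v $ i"
  unfolding scalar_product_def axis_def by (simp add: if_distrib[where f="\<lambda>x. x * _"] cong: if_cong)

lemma vec3_eq_iff: "u = v \<longleftrightarrow> u$1 = v$1 \<and> u$2 = v$2 \<and> u$3 = v$3" for u v :: "'a^3"
  by (simp add: vec_eq_iff forall_3)

lemma vec3_eq_0_iff: "u = 0 \<longleftrightarrow> u$1 = 0 \<and> u$2 = 0 \<and> u$3 = 0" for u :: "'a::zero^3"
  by (simp add: vec_eq_iff forall_3)

lemma pg_line_scalar_product: "pg_line a = {pg_point v | v. v \<noteq> 0 \<and> scalar_product a v = 0}"
  by (simp add: pg_line_def scalar_product_def)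

lemma pg_point_self: "v \<in> pg_point v"
  unfolding pg_point_def by (rule CollectI, rule exI[of _ 1]) simp

lemma pg_point_smult:
  assumes "(c::'a::field) \<noteq> 0"
  shows "pg_point (c *s v) = pg_point v"
proof -
  have "{d *s (c *s v) | d. d \<noteq> 0} = {d *s v | d. d \<noteq> 0}"
  proof (intro equalityI subsetI)
    fix x
    assume "x \<in> {d *s (c *s v) |d. d \<noteq> 0}"
    then obtain d where "d \<noteq> 0" "x = d *s (c *s v)" by auto
    then show "x \<in> {d *s v |d. d \<noteq> 0}"
      using assms by (auto intro!: exI[of _ "d * c"] simp: vector_smult_assoc)
  next
    fix x
    assume "x \<in> {d *s v |d. d \<noteq> 0}"
    then obtain d where "d \<noteq> 0" "x = d *s v" by auto
    then show "x \<in> {d *s (c *s v) |d. d \<noteq> 0}"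
      using assms by (auto intro!: exI[of _ "d / c"] simp: vector_smult_assoc)
  qed
  then show ?thesis by (simp add: pg_point_def)
qed

lemma pg_point_eq_iff:
  fixes u v :: "'a::field^3"
  assumes "u \<noteq> 0"
  shows "pg_point u = pg_point v \<longleftrightarrow> (\<exists>c. c \<noteq> 0 \<and> u = c *s v)"
proof
  assume "pg_point u = pg_point v"
  then have "u \<in> pg_point v" using pg_point_self by metis
  then show "\<exists>c. c \<noteq> 0 \<and> u = c *s v" unfolding pg_point_def by auto
qed (auto simp: pg_point_smult)

lemma pg_point_in_pg_line_iff:
  assumes "v \<noteq> 0"
  shows "pg_point v \<in> pg_line a \<longleftrightarrow> scalar_product a v = 0"
proof
  assume "pg_point v \<in> pg_line a"
  then obtain w where w: "scalar_product a w = 0" "pg_point v = pg_point w"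
    unfolding pg_line_scalar_product by auto
  then obtain c where "v = c *s w" using pg_point_eq_iff[OF assms] by auto
  with w(1) show "scalar_product a v = 0" by (simp add: scalar_product_smult_right)
qed (use assms in \<open>auto simp: pg_line_scalar_product\<close>)

lemma pg_pointsE:
  assumes "P \<in> pg_points"
  obtains v where "v \<noteq> 0" "P = pg_point v"
  using assms unfolding pg_points_def by auto

lemma pg_linesE:
  assumes "l \<in> pg_lines"
  obtains a where "a \<noteq> 0" "l = pg_line a"
  using assms unfolding pg_lines_def by auto

lemma pg_point_in_pg_points: "v \<noteq> 0 \<Longrightarrow> pg_point v \<in> pg_points"
  unfolding pg_points_def by auto

lemma pg_line_in_pg_lines: "a \<noteq> 0 \<Longrightarrow> pg_line a \<in> pg_lines"
  unfolding pg_lines_def by auto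

lemma pg_line_subset_pg_points: "pg_line a \<subseteq> pg_points"
  unfolding pg_line_def pg_points_def by auto

lemma pg_line_smult: "(c::'a::field) \<noteq> 0 \<Longrightarrow> pg_line (c *s a) = pg_line a"
  unfolding pg_line_scalar_product by (simp add: scalar_product_smult_left)

lemma pg_point_add_smult_in_pg_line:
  assumes "l \<in> pg_lines" "pg_point u \<in> l" "pg_point v \<in> l" "u \<noteq> 0" "v \<noteq> 0"
    and "u + t *s v \<noteq> 0"
  shows "pg_point (u + t *s v) \<in> l"
proof -
  obtain a where a: "l = pg_line a" using assms(1) by (rule pg_linesE)
  have "scalar_product a u = 0" "scalar_product a v = 0"
    using assms(2-5) a pg_point_in_pg_line_iff by auto
  then have "scalar_product a (u + t *s v) = 0"
    by (simp add: scalar_product_commute[of a] scalar_product_add_left scalar_product_smult_left)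
  with assms(6) a show ?thesis by (simp add: pg_point_in_pg_line_iff)
qed

text \<open>HOL-Analysis only provides the cross product on \<open>real^3\<close>.\<close>

definition cross_vec :: "'a::field^3 \<Rightarrow> 'a^3 \<Rightarrow> 'a^3" where
  "cross_vec u v = vector [u$2 * v$3 - u$3 * v$2, u$3 * v$1 - u$1 * v$3, u$1 * v$2 - u$2 * v$1]"

lemma scalar_product_cross_vec_left: "scalar_product u (cross_vec u v) = 0"
  by (simp add: scalar_product_3 cross_vec_def algebra_simps)

lemma scalar_product_cross_vec_right: "scalar_product v (cross_vec u v) = 0"
  by (simp add: scalar_product_3 cross_vec_def algebra_simps)

lemma scalar_product_cross_vec_cyclic:
  "scalar_product b (cross_vec a e) = scalar_product e (cross_vec b a)"
  by (simp add: scalar_product_3 cross_vec_def algebra_simps)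

lemma cross_vec_cross_vec:
  "cross_vec a (cross_vec u v) = scalar_product a v *s u - scalar_product a u *s v"
  by (simp add: vec3_eq_iff cross_vec_def scalar_product_3 algebra_simps)

lemma cross_vec_eq_0_imp_smult:
  assumes "cross_vec u v = 0" "v \<noteq> 0"
  obtains c where "u = c *s v"
proof -
  have e: "u$2 * v$3 = u$3 * v$2" "u$3 * v$1 = u$1 * v$3" "u$1 * v$2 = u$2 * v$1"
    using assms(1) by (simp_all add: cross_vec_def vec3_eq_0_iff)
  obtain i where i: "v $ i \<noteq> 0" using assms(2) by (auto simp: vec_eq_iff)
  have "u = (u $ i / v $ i) *s v"
    using exhaust_3[of i] i e by (auto simp: vec3_eq_iff field_simps)
  then show thesis by (rule that)
qed

lemma pg_point_neq_imp_not_smult: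
  assumes "u \<noteq> 0" "pg_point u \<noteq> pg_point v"
  shows "\<nexists>c. u = c *s v"
proof
  assume "\<exists>c. u = c *s v"
  then obtain c where c: "u = c *s v" by blast
  with assms(1) have "c \<noteq> 0" by auto
  with c assms(2) show False by (simp add: pg_point_smult)
qed

lemma cross_vec_neq_0:
  assumes "u \<noteq> 0" "v \<noteq> 0" "pg_point u \<noteq> pg_point v"
  shows "cross_vec u v \<noteq> 0"
proof
  assume "cross_vec u v = 0"
  then obtain c where "u = c *s v" using assms(2) by (rule cross_vec_eq_0_imp_smult)
  with pg_point_neq_imp_not_smult[OF assms(1,3)] show False by blast
qed

lemma pg_line_through_two_points:
  assumes "P \<in> pg_points" "Q \<in> pg_points" "P \<noteq> Q"
  obtains l where "l \<in> pg_lines" "P \<in> l" "Q \<in> l"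
proof -
  obtain u v where u: "u \<noteq> 0" "P = pg_point u" and v: "v \<noteq> 0" "Q = pg_point v"
    using assms(1,2) by (meson pg_pointsE)
  have "cross_vec u v \<noteq> 0" using cross_vec_neq_0 u v assms(3) by blast
  with u v show thesis
    by (intro that[of "pg_line (cross_vec u v)"])
       (auto simp: pg_point_in_pg_line_iff pg_line_in_pg_lines
         scalar_product_cross_vec_left scalar_product_cross_vec_right scalar_product_commute)
qed

lemma pg_line_unique:
  assumes "l \<in> pg_lines" "m \<in> pg_lines" "P \<in> l" "P \<in> m" "Q \<in> l" "Q \<in> m" "P \<noteq> Q"
  shows "l = m"
proof -
  obtain a where a: "a \<noteq> 0" "l = pg_line a" using assms(1) by (rule pg_linesE)
  obtain b where b: "b \<noteq> 0" "m = pg_line b" using assms(2) by (rule pg_linesE)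
  obtain u where u: "u \<noteq> 0" "P = pg_point u"
    using assms(3) a pg_line_subset_pg_points by (meson pg_pointsE subsetD)
  obtain v where v: "v \<noteq> 0" "Q = pg_point v"
    using assms(5) a pg_line_subset_pg_points by (meson pg_pointsE subsetD)
  let ?w = "cross_vec u v"
  have w: "?w \<noteq> 0" using cross_vec_neq_0 u v assms(7) by blast
  have "scalar_product a u = 0" "scalar_product a v = 0"
    "scalar_product b u = 0" "scalar_product b v = 0"
    using assms a b u v pg_point_in_pg_line_iff by auto
  then have "cross_vec a ?w = 0" "cross_vec b ?w = 0"
    by (simp_all add: cross_vec_cross_vec)
  then obtain c d where "a = c *s ?w" "b = d *s ?w"
    using w by (metis cross_vec_eq_0_imp_smult)
  with a b have "l = pg_line ?w" "m = pg_line ?w"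
    by (auto simp: pg_line_smult)
  then show ?thesis by simp
qed

lemma pg_line_eq_imp_smult:
  assumes "b \<noteq> 0" "pg_line a = pg_line b"
  obtains c where "a = c *s b"
proof (cases "cross_vec a b = 0")
  case True
  then show thesis using assms(1) that by (rule cross_vec_eq_0_imp_smult)
next
  case False
  then obtain i where i: "cross_vec a b $ i \<noteq> 0" by (auto simp: vec_eq_iff)
  \<comment> \<open>\<open>\<langle>w\<rangle>\<close> lies on \<open>pg_line b\<close> but not on \<open>pg_line a\<close>\<close>
  let ?w = "cross_vec b (axis i 1)"
  have on_a: "scalar_product a ?w \<noteq> 0"
    using i scalar_product_cross_vec_cyclic[of a b "axis i 1"] by (simp add: scalar_product_axis)
  have "?w \<noteq> 0" using on_a by (auto simp: scalar_product_3)
  with on_a scalar_product_cross_vec_left[of b "axis i 1"] assms(2) show thesis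
    by (metis pg_point_in_pg_line_iff)
qed

lemma add_smult_neq_0:
  fixes a b :: "'a::field^3"
  assumes "\<nexists>c. a = c *s b"
  shows "a + t *s b \<noteq> 0"
proof
  assume "a + t *s b = 0"
  then have "a = (- t) *s b" by (simp add: vec3_eq_iff eq_neg_iff_add_eq_0)
  with assms show False by blast
qed

lemma card_span_pencil:
  fixes f :: "'a::{field,finite}^3 \<Rightarrow> 'b" and K :: "'a set"
  assumes "b \<noteq> 0" and indep: "\<nexists>c. a = c *s b"
    and f_eq: "\<And>u v. u \<noteq> 0 \<Longrightarrow> v \<noteq> 0 \<Longrightarrow> f u = f v \<Longrightarrow> \<exists>c. u = c *s v"
  shows "card (insert (f b) ((\<lambda>t. f (a + t *s b)) ` K)) = card K + 1"
proof -
  have smult_indep: "x = 0" if "x *s a = y *s b" for x y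
  proof (rule ccontr)
    assume "x \<noteq> 0"
    with that have "a = (y / x) *s b" by (simp add: vec3_eq_iff field_simps)
    with indep show False by blast
  qed
  have nz: "a + t *s b \<noteq> 0" for t using add_smult_neq_0[OF indep] .
  have "inj_on (\<lambda>t. f (a + t *s b)) K"
  proof (rule inj_onI)
    fix t t' assume "f (a + t *s b) = f (a + t' *s b)"
    then obtain c where c: "a + t *s b = c *s (a + t' *s b)" using f_eq nz by blast
    then have "(1 - c) *s a = (c * t' - t) *s b" by (simp add: vec3_eq_iff algebra_simps)
    then have "1 - c = 0" by (rule smult_indep)
    with c have "t *s b = t' *s b" by (simp add: vec3_eq_iff)
    with assms(1) show "t = t'" by simp
  qed
  moreover have "f b \<noteq> f (a + t *s b)" for t
  proof
    assume "f b = f (a + t *s b)"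
    then obtain c where c: "b = c *s (a + t *s b)" using f_eq nz assms(1) by blast
    then have "c *s a = (1 - c * t) *s b" by (simp add: vec3_eq_iff algebra_simps)
    then have "c = 0" by (rule smult_indep)
    with c assms(1) show False by simp
  qed
  ultimately show ?thesis by (subst card_insert_disjoint) (auto simp: card_image)
qed

section \<open>Pencils and secants\<close>

definition pencil :: "('a::field^3) set \<Rightarrow> ('a^3) set set set" where
  "pencil P = {l \<in> pg_lines. P \<in> l}"

definition secants :: "('a::field^3) set set \<Rightarrow> ('a^3) set set set" where
  "secants S = {l \<in> pg_lines. 2 \<le> card (l \<inter> S)}"

lemma card_pencil_ge:
  fixes P :: "('a::{field,finite}^3) set"
  assumes "P \<in> pg_points"
  shows "CARD('a) + 1 \<le> card (pencil P)"
proof -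
  obtain v where v: "v \<noteq> 0" "P = pg_point v" using assms by (rule pg_pointsE)
  obtain a b :: "'a^3" where ab: "a \<noteq> 0" "b \<noteq> 0" "scalar_product a v = 0"
    "scalar_product b v = 0" "\<nexists>c. a = c *s b"
  proof -
    consider "v$1 \<noteq> 0" | "v$2 \<noteq> 0" | "v$3 \<noteq> 0" using v vec3_eq_0_iff by blast
    then show thesis
    proof cases
      case 1
      show thesis
        by (rule that[of "vector [v$2, - v$1, 0]" "vector [v$3, 0, - v$1]"])
           (use 1 in \<open>auto simp: vec3_eq_iff scalar_product_3 algebra_simps\<close>)
    next
      case 2
      show thesis
        by (rule that[of "vector [- v$2, v$1, 0]" "vector [0, v$3, - v$2]"])
           (use 2 in \<open>auto simp: vec3_eq_iff scalar_product_3 algebra_simps\<close>)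
    next
      case 3
      show thesis
        by (rule that[of "vector [- v$3, 0, v$1]" "vector [0, - v$3, v$2]"])
           (use 3 in \<open>auto simp: vec3_eq_iff scalar_product_3 algebra_simps\<close>)
    qed
  qed
  have "card (insert (pg_line b) (range (\<lambda>t. pg_line (a + t *s b)))) = CARD('a) + 1"
    using card_span_pencil[of b a pg_line UNIV] ab(2,5)
    by (metis pg_line_eq_imp_smult)
  moreover have "insert (pg_line b) (range (\<lambda>t. pg_line (a + t *s b))) \<subseteq> pencil P"
    using ab v add_smult_neq_0[OF ab(5)]
    by (auto simp: pencil_def pg_line_in_pg_lines pg_point_in_pg_line_iff
        scalar_product_add_left scalar_product_smult_left)
  ultimately show ?thesis by (metis card_mono finite)
qed

lemma sum_card_pencil_Int:
  fixes S :: "('a::{field,finite}^3) set set"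
  assumes "P \<in> pg_points" "S \<subseteq> pg_points" "P \<notin> S"
  shows "(\<Sum>l\<in>pencil P. card (l \<inter> S)) = card S"
proof -
  have "S = (\<Union>l\<in>pencil P. l \<inter> S)"
  proof (intro equalityI subsetI)
    fix R assume R: "R \<in> S"
    with assms obtain l where "l \<in> pg_lines" "P \<in> l" "R \<in> l"
      by (metis pg_line_through_two_points subsetD)
    with R show "R \<in> (\<Union>l\<in>pencil P. l \<inter> S)" by (auto simp: pencil_def)
  qed auto
  moreover have "card (\<Union>l\<in>pencil P. l \<inter> S) = (\<Sum>l\<in>pencil P. card (l \<inter> S))"
  proof (rule card_UN_disjoint)
    show "\<forall>l\<in>pencil P. \<forall>m\<in>pencil P. l \<noteq> m \<longrightarrow> l \<inter> S \<inter> (m \<inter> S) = {}"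
      using assms(3) pg_line_unique by (fastforce simp: pencil_def)
  qed simp_all
  ultimately show ?thesis by simp
qed

lemma card_pencil_meeting_le:
  fixes X :: "('a::{field,finite}^3) set set"
  shows "card {l \<in> pencil P. \<exists>R\<in>X. R \<in> l \<and> R \<noteq> P} \<le> card X"
proof -
  let ?L = "{l \<in> pencil P. \<exists>R\<in>X. R \<in> l \<and> R \<noteq> P}"
  define R where "R l = (SOME R. R \<in> X \<and> R \<in> l \<and> R \<noteq> P)" for l
  have R: "R l \<in> X \<and> R l \<in> l \<and> R l \<noteq> P" if "l \<in> ?L" for l
  proof -
    from that have "\<exists>R. R \<in> X \<and> R \<in> l \<and> R \<noteq> P" by blast
    then show ?thesis unfolding R_def by (rule someI_ex)
  qed
  have "inj_on R ?L"
    by (rule inj_onI) (metis (no_types, lifting) R mem_Collect_eq pencil_def pg_line_unique)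
  with R show ?thesis by (intro card_inj_on_le) auto
qed

lemma card_subset_insert_pencil_meeting_le:
  fixes X :: "('a::{field,finite}^3) set set"
  assumes "A \<subseteq> insert m {l \<in> pencil P. \<exists>R\<in>X. R \<in> l \<and> R \<noteq> P}"
  shows "card A \<le> card X + 1"
proof -
  have "card A \<le> card (insert m {l \<in> pencil P. \<exists>R\<in>X. R \<in> l \<and> R \<noteq> P})"
    using assms by (simp add: card_mono)
  also have "\<dots> \<le> card {l \<in> pencil P. \<exists>R\<in>X. R \<in> l \<and> R \<noteq> P} + 1"
    by (simp add: card_insert_if)
  also have "\<dots> \<le> card X + 1" using card_pencil_meeting_le[of P X] by linarith
  finally show ?thesis .
qed

lemma secant_other_point:
  assumes "l \<in> secants S"
  obtains R where "R \<in> l" "R \<in> S" "R \<noteq> P"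
proof -
  have "2 \<le> card (l \<inter> S)" using assms by (simp add: secants_def)
  then have "card (l \<inter> S - {P}) \<noteq> 0" by (simp add: card_Diff_singleton_if)
  then obtain R where "R \<in> l \<inter> S - {P}" by (metis card.empty ex_in_conv)
  with that show thesis by blast
qed

text \<open>Writing \<open>\<langle>u\<rangle>\<close> for \<open>pg_point u\<close>: a line through two points \<open>\<langle>u\<rangle>, \<langle>w\<rangle>\<close> of the set
  contains all \<open>\<langle>u + t w\<rangle>\<close> with \<open>t \<in> K\<close>, and these are distinct from each other and from \<open>\<langle>w\<rangle>\<close>.\<close>

lemma card_secant_linear_set_ge:
  fixes U :: "('a::{field,finite}^3) set" and K :: "'a set"
  assumes add: "\<And>u w. u \<in> U \<Longrightarrow> w \<in> U \<Longrightarrow> u + w \<in> U"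
    and smult: "\<And>t u. t \<in> K \<Longrightarrow> u \<in> U \<Longrightarrow> t *s u \<in> U"
    and l: "l \<in> secants {pg_point u | u. u \<in> U \<and> u \<noteq> 0}"
  shows "card K + 1 \<le> card (l \<inter> {pg_point u | u. u \<in> U \<and> u \<noteq> 0})"
proof -
  let ?S = "{pg_point u | u. u \<in> U \<and> u \<noteq> 0}"
  obtain P1 where P1: "P1 \<in> l" "P1 \<in> ?S" using l by (rule secant_other_point)
  obtain P2 where P2: "P2 \<in> l" "P2 \<in> ?S" "P2 \<noteq> P1" using l by (rule secant_other_point)
  obtain u where u: "u \<in> U" "u \<noteq> 0" "P1 = pg_point u" using P1 by blast
  obtain w where w: "w \<in> U" "w \<noteq> 0" "P2 = pg_point w" using P2 by blast
  have "pg_point u \<noteq> pg_point w" using P2(3) u(3) w(3) by simp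
  with u(2) have indep: "\<nexists>c. u = c *s w" by (rule pg_point_neq_imp_not_smult)
  have l_line: "l \<in> pg_lines" using l by (simp add: secants_def)
  have "insert (pg_point w) ((\<lambda>t. pg_point (u + t *s w)) ` K) \<subseteq> l \<inter> ?S"
  proof (intro insert_subsetI image_subsetI)
    fix t assume "t \<in> K"
    then have "u + t *s w \<in> U" using u w add smult by blast
    moreover have "pg_point (u + t *s w) \<in> l"
      using pg_point_add_smult_in_pg_line[OF l_line] P1 P2 u w add_smult_neq_0[OF indep] by simp
    ultimately show "pg_point (u + t *s w) \<in> l \<inter> ?S" using add_smult_neq_0[OF indep] by blast
  qed (use P2(1,2) w(3) in simp)
  then have "card (insert (pg_point w) ((\<lambda>t. pg_point (u + t *s w)) ` K)) \<le> card (l \<inter> ?S)"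
    by (simp add: card_mono)
  moreover have "card (insert (pg_point w) ((\<lambda>t. pg_point (u + t *s w)) ` K)) = card K + 1"
    using w(2) indep by (rule card_span_pencil) (auto simp: pg_point_eq_iff)
  ultimately show ?thesis by simp
qed

section \<open>Projectivities\<close>

lemma image_pg_point: "(\<lambda>v. M *v v) ` pg_point v = pg_point (M *v v)"
proof (intro equalityI subsetI)
  fix x assume "x \<in> (\<lambda>v. M *v v) ` pg_point v"
  then obtain c where "c \<noteq> 0" "x = M *v (c *s v)" by (auto simp: pg_point_def)
  then show "x \<in> pg_point (M *v v)" by (auto simp: pg_point_def vector_scalar_commute)
next
  fix x assume "x \<in> pg_point (M *v v)"
  then obtain c where c: "c \<noteq> 0" "x = M *v (c *s v)"
    by (auto simp: pg_point_def vector_scalar_commute)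
  then have "c *s v \<in> pg_point v" by (auto simp: pg_point_def)
  with c show "x \<in> (\<lambda>v. M *v v) ` pg_point v" by blast
qed

lemma projectivity_image_inverse:
  "M' ** M = mat 1 \<Longrightarrow> projectivity_image M' (projectivity_image M X) = X"
  by (simp add: projectivity_image_def image_image matrix_vector_mul_assoc)

lemma projectivity_image_pg_line:
  fixes M :: "'a::field^3^3"
  assumes "invertible M" "l \<in> pg_lines"
  shows "projectivity_image M l \<in> pg_lines"
proof -
  obtain M' where M': "M ** M' = mat 1" "M' ** M = mat 1"
    using assms(1) unfolding invertible_def by blast
  obtain a where a: "a \<noteq> 0" "l = pg_line a" using assms(2) by (rule pg_linesE)
  have MM: "M' *v (M *v v) = v" "M *v (M' *v v) = v" for v
    using M' by (simp_all add: matrix_vector_mul_assoc)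
  let ?b = "transpose M' *v a"
  have "transpose M *v ?b = a" using M' by (simp add: vector_matrix_mul_assoc)
  with a have b: "?b \<noteq> 0" by auto
  have sp: "scalar_product a (M' *v w) = scalar_product ?b w" for w
    by (simp add: scalar_product_3 matrix_vector_mult_def transpose_def sum_3 algebra_simps)
  have "projectivity_image M l = pg_line ?b"
  proof (intro equalityI subsetI)
    fix X assume "X \<in> projectivity_image M l"
    then obtain v where v: "v \<noteq> 0" "scalar_product a v = 0" "X = pg_point (M *v v)"
      unfolding projectivity_image_def a(2) pg_line_scalar_product by (auto simp: image_pg_point)
    have "M *v v \<noteq> 0" using MM(1)[of v] v(1) by auto
    moreover have "scalar_product ?b (M *v v) = 0"
      using sp[of "M *v v"] v(2) MM(1) by simp
    ultimately show "X \<in> pg_line ?b" using v(3) unfolding pg_line_scalar_product by blast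
  next
    fix X assume "X \<in> pg_line ?b"
    then obtain w where w: "w \<noteq> 0" "scalar_product ?b w = 0" "X = pg_point w"
      unfolding pg_line_scalar_product by auto
    have "M' *v w \<noteq> 0" using MM(2)[of w] w(1) by auto
    moreover have "X = (\<lambda>v. M *v v) ` pg_point (M' *v w)"
      using w MM(2) by (simp add: image_pg_point)
    moreover have "scalar_product a (M' *v w) = 0" using sp[of w] w(2) by simp
    ultimately show "X \<in> projectivity_image M l"
      unfolding projectivity_image_def a(2) pg_line_scalar_product by blast
  qed
  with b show ?thesis by (simp add: pg_line_in_pg_lines)
qed

lemma projectivity_image_pg_lines:
  assumes "invertible (M::'a::field^3^3)"
  shows "projectivity_image M ` pg_lines = pg_lines"
proof -
  obtain M' where M': "M ** M' = mat 1" "M' ** M = mat 1"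
    using assms unfolding invertible_def by blast
  then have "invertible M'" unfolding invertible_def by blast
  then have "l \<in> projectivity_image M ` pg_lines" if "l \<in> pg_lines" for l
    using projectivity_image_inverse[OF M'(1), of l] projectivity_image_pg_line that by blast
  with assms show ?thesis using projectivity_image_pg_line by blast
qed

lemma inj_image_matrix_vector_mult:
  "invertible (M::'a::field^3^3) \<Longrightarrow> inj (\<lambda>P. (\<lambda>v. M *v v) ` P)"
  using inj_matrix_vector_mult by (metis injI inj_image_eq_iff)

lemma inj_projectivity_image:
  "invertible (M::'a::field^3^3) \<Longrightarrow> inj (projectivity_image M)"
  unfolding projectivity_image_def by (metis injI inj_image_eq_iff inj_image_matrix_vector_mult)

lemma projectivity_image_Int:
  "invertible M \<Longrightarrow> projectivity_image M (X \<inter> Y) = projectivity_image M X \<inter> projectivity_image M Y"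
  unfolding projectivity_image_def by (simp add: image_Int inj_image_matrix_vector_mult)

lemma card_projectivity_image:
  assumes "invertible M"
  shows "card (projectivity_image M X) = card X"
  unfolding projectivity_image_def
  by (rule card_image) (metis assms inj_image_matrix_vector_mult inj_on_subset subset_UNIV)

lemma Collect_pg_lines_projectivity_image:
  assumes M: "invertible M"
    and Q: "\<And>l. l \<in> pg_lines \<Longrightarrow> Q (projectivity_image M l) \<longleftrightarrow> Q0 l"
  shows "{l \<in> pg_lines. Q l} = projectivity_image M ` {l \<in> pg_lines. Q0 l}"
proof (intro equalityI subsetI)
  fix l assume l: "l \<in> {l \<in> pg_lines. Q l}"
  then obtain l0 where "l0 \<in> pg_lines" "l = projectivity_image M l0"
    using projectivity_image_pg_lines[OF M] by (metis (no_types, lifting) imageE mem_Collect_eq)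
  with l Q show "l \<in> projectivity_image M ` {l \<in> pg_lines. Q0 l}" by auto
next
  fix l assume "l \<in> projectivity_image M ` {l \<in> pg_lines. Q0 l}"
  with Q projectivity_image_pg_line[OF M] show "l \<in> {l \<in> pg_lines. Q l}" by auto
qed

lemma secants_projectivity_image:
  assumes "invertible M"
  shows "secants (projectivity_image M S) = projectivity_image M ` secants S"
  unfolding secants_def using assms
  by (intro Collect_pg_lines_projectivity_image)
     (simp_all flip: projectivity_image_Int add: card_projectivity_image)

lemma pencil_projectivity_image:
  assumes "invertible M"
  shows "pencil ((\<lambda>v. M *v v) ` P) = projectivity_image M ` pencil P"
  unfolding pencil_def using assms
  by (intro Collect_pg_lines_projectivity_image)
     (simp_all add: projectivity_image_def inj_image_mem_iff inj_image_matrix_vector_mult)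

section \<open>Counting two-point lines\<close>

text \<open>The properties of the trace set, with \<open>r = q\<^sup>h\<^sup>-\<^sup>1\<close>, that the counting argument uses.\<close>

definition trace_like :: "nat \<Rightarrow> nat \<Rightarrow> ('a::{field,finite}^3) set set \<Rightarrow> bool" where
  "trace_like q r S \<longleftrightarrow> S \<subseteq> pg_points \<and> card S \<le> CARD('a) + r + 1 \<and>
     (\<forall>l\<in>secants S. q + 1 \<le> card (l \<inter> S)) \<and> (\<forall>P\<in>S. card (pencil P \<inter> secants S) \<le> r + 1)"

lemma trace_like_projectivity_image:
  assumes M: "invertible M" and S: "trace_like q r S"
  shows "trace_like q r (projectivity_image M S)"
  unfolding trace_like_def
proof (intro conjI ballI)
  have "M *v v \<noteq> 0" if "v \<noteq> 0" for v
    using inj_matrix_vector_mult[OF M] that by (metis injD matrix_vector_mult_0_right)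
  then show "projectivity_image M S \<subseteq> pg_points"
    using S by (force simp: trace_like_def projectivity_image_def image_pg_point
        pg_point_in_pg_points elim!: pg_pointsE)
  show "card (projectivity_image M S) \<le> CARD('a) + r + 1"
    using S M by (simp add: trace_like_def card_projectivity_image)
next
  fix l assume "l \<in> secants (projectivity_image M S)"
  then obtain l0 where "l0 \<in> secants S" "l = projectivity_image M l0"
    using secants_projectivity_image[OF M] by auto
  with S M show "q + 1 \<le> card (l \<inter> projectivity_image M S)"
    by (simp add: trace_like_def card_projectivity_image flip: projectivity_image_Int)
next
  fix P' assume "P' \<in> projectivity_image M S"
  then obtain P where P: "P \<in> S" "P' = (\<lambda>v. M *v v) ` P"
    unfolding projectivity_image_def by auto
  have "pencil P' \<inter> secants (projectivity_image M S) =
      projectivity_image M ` (pencil P \<inter> secants S)"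
    using M P(2) inj_projectivity_image[OF M]
    by (simp add: pencil_projectivity_image secants_projectivity_image image_Int)
  with S P(1) M show "card (pencil P' \<inter> secants (projectivity_image M S)) \<le> r + 1"
    using card_image[OF inj_on_subset[OF inj_projectivity_image[OF M] subset_UNIV]]
    by (simp add: trace_like_def)
qed

lemma card_Int_Un_disjoint:
  "S1 \<inter> S2 = {} \<Longrightarrow> card (l \<inter> (S1 \<union> S2)) = card (l \<inter> S1) + card (l \<inter> S2)"
  for l :: "('a::finite^3) set set"
  by (subst card_Un_disjoint[symmetric]) (auto simp: Int_Un_distrib)

lemma blocking_setD:
  assumes "blocking_set S"
  shows "S \<subseteq> pg_points" and "l \<in> pg_lines \<Longrightarrow> 0 < card (l \<inter> S)"
  using assms by (auto simp: blocking_set_def t_fold_blocking_set_def)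

lemma card_pencil_Int_secants_le:
  fixes S :: "('a::{field,finite}^3) set set"
  assumes S: "blocking_set S" "trace_like q (q * s) S" and P: "P \<in> pg_points" "P \<notin> S"
    and "0 < q"
  shows "card (pencil P \<inter> secants S) \<le> s"
proof -
  have "card (pencil P) + q * card (pencil P \<inter> secants S) =
      (\<Sum>l\<in>pencil P. 1 + (if l \<in> secants S then q else 0))"
    by (subst sum.distrib) (simp add: sum.If_cases)
  also have "\<dots> \<le> (\<Sum>l\<in>pencil P. card (l \<inter> S))"
  proof (rule sum_mono)
    fix l assume "l \<in> pencil P"
    then show "1 + (if l \<in> secants S then q else 0) \<le> card (l \<inter> S)"
      using S by (auto simp: pencil_def trace_like_def Suc_le_eq blocking_setD)
  qed
  also have "\<dots> = card S"
    using S P by (simp add: sum_card_pencil_Int blocking_setD)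
  also have "\<dots> \<le> CARD('a) + q * s + 1"
    using S by (simp add: trace_like_def)
  finally have "q * card (pencil P \<inter> secants S) \<le> q * s"
    using card_pencil_ge[OF P(1)] by linarith
  with \<open>0 < q\<close> show ?thesis by simp
qed

lemma card_Int_Un_eq_2:
  fixes S1 S2 :: "('a::{field,finite}^3) set set"
  assumes "blocking_set S1" "blocking_set S2" "S1 \<inter> S2 = {}"
    and "l \<in> pg_lines" "l \<notin> secants S1" "l \<notin> secants S2"
  shows "card (l \<inter> (S1 \<union> S2)) = 2"
proof -
  have "0 < card (l \<inter> S1)" "0 < card (l \<inter> S2)"
    using assms(4) blocking_setD(2)[OF assms(1)] blocking_setD(2)[OF assms(2)] by auto
  moreover have "card (l \<inter> S1) < 2" "card (l \<inter> S2) < 2"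
    using assms(4-6) by (auto simp: secants_def)
  ultimately show ?thesis using card_Int_Un_disjoint[OF assms(3)] by simp
qed

lemma card_two_point_lines_ge:
  fixes S1 S2 :: "('a::{field,finite}^3) set set"
  assumes S1: "blocking_set S1" "trace_like q (q * s) S1"
    and S2: "blocking_set S2" "trace_like q (q * s) S2"
    and "S1 \<inter> S2 = {}" "P \<in> S1" "0 < q"
  shows "CARD('a) - q * s - s \<le> card {l \<in> pencil P. card (l \<inter> (S1 \<union> S2)) = 2}"
proof -
  let ?A = "pencil P \<inter> secants S1" and ?B = "pencil P \<inter> secants S2"
  have P: "P \<in> pg_points" "P \<notin> S2" using assms blocking_setD(1)[OF S1(1)] by auto
  have "card ?A \<le> q * s + 1" using S1(2) \<open>P \<in> S1\<close> by (simp add: trace_like_def)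
  moreover have "card ?B \<le> s" using card_pencil_Int_secants_le[OF S2 P \<open>0 < q\<close>] .
  moreover have "CARD('a) + 1 \<le> card (pencil P)" using card_pencil_ge[OF P(1)] .
  moreover have "card (pencil P) - card (?A \<union> ?B) \<le> card (pencil P - (?A \<union> ?B))"
    by (rule diff_card_le_card_Diff) simp
  moreover have "pencil P - (?A \<union> ?B) \<subseteq> {l \<in> pencil P. card (l \<inter> (S1 \<union> S2)) = 2}"
    using card_Int_Un_eq_2[OF S1(1) S2(1) \<open>S1 \<inter> S2 = {}\<close>] by (auto simp: pencil_def)
  then have "card (pencil P - (?A \<union> ?B)) \<le> card {l \<in> pencil P. card (l \<inter> (S1 \<union> S2)) = 2}"
    by (simp add: card_mono)
  moreover have "card (?A \<union> ?B) \<le> card ?A + card ?B" by (rule card_Un_le)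
  ultimately show ?thesis by linarith
qed

lemma card_two_point_lines_Un_ge:
  fixes S1 S2 :: "('a::{field,finite}^3) set set"
  assumes "blocking_set S1" "trace_like q (q * s) S1" "blocking_set S2" "trace_like q (q * s) S2"
    and "S1 \<inter> S2 = {}" "P \<in> S1 \<union> S2" "0 < q"
  shows "CARD('a) - q * s - s \<le> card {l \<in> pencil P. card (l \<inter> (S1 \<union> S2)) = 2}"
proof -
  have "S2 \<inter> S1 = {}" using assms(5) by blast
  with assms card_two_point_lines_ge[of S1 q s S2 P] card_two_point_lines_ge[of S2 q s S1 P]
  show ?thesis by (auto simp: Un_commute)
qed

lemma double_blocking_set_Un:
  fixes S1 S2 :: "('a::{field,finite}^3) set set"
  assumes "blocking_set S1" "blocking_set S2" "S1 \<inter> S2 = {}"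
  shows "double_blocking_set (S1 \<union> S2)"
  using blocking_setD[OF assms(1)] blocking_setD[OF assms(2)] card_Int_Un_disjoint[OF assms(3)]
  by (fastforce simp: double_blocking_set_def t_fold_blocking_set_def)

lemma minimal_double_blocking_setI:
  assumes "double_blocking_set B" and two: "\<And>P. P \<in> B \<Longrightarrow> \<exists>l\<in>pencil P. card (l \<inter> B) = 2"
  shows "minimal_double_blocking_set B"
  unfolding minimal_double_blocking_set_def
proof (intro conjI allI impI assms(1))
  fix B' assume "B' \<subset> B"
  then obtain P where P: "P \<in> B" "P \<notin> B'" by blast
  then obtain l where l: "l \<in> pencil P" "card (l \<inter> B) = 2" using two by blast
  then have "finite (l \<inter> B)" by (simp add: card_ge_0_finite)
  with \<open>B' \<subset> B\<close> P have "card (l \<inter> B') \<le> card (l \<inter> B - {P})" by (intro card_mono) auto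
  also have "\<dots> = 1" using l P by (simp add: pencil_def)
  finally have "card (l \<inter> B') < 2" by simp
  with l(1) show "\<not> double_blocking_set B'"
    by (force simp: double_blocking_set_def t_fold_blocking_set_def pencil_def)
qed

section \<open>The trace set\<close>

lemma of_nat_CARD_eq_0: "of_nat CARD('a) = (0::'a::{ring_1,finite})"
proof -
  have "(\<Sum>y\<in>UNIV. y + 1) = (\<Sum>y\<in>UNIV. (y::'a))"
    by (rule sum.reindex_bij_witness[of _ "\<lambda>y. y - 1" "\<lambda>y. y + 1"]) auto
  then show ?thesis by (simp add: sum.distrib)
qed

lemma prime_CHAR_finite_field: "prime CHAR('a::{field,finite})"
  by (simp add: finite_imp_CHAR_pos prime_CHAR_semidom)

lemma power_card_field_eq_self:
  fixes x :: "'a::{field,finite}"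
  shows "x ^ CARD('a) = x"
proof (cases "x = 0")
  case False
  let ?U = "UNIV - {0::'a}"
  have "x ^ card ?U * (\<Prod>y\<in>?U. y) = (\<Prod>y\<in>?U. x * y)"
    by (simp add: prod.distrib)
  also have "\<dots> = (\<Prod>y\<in>?U. y)"
    using False by (intro prod.reindex_bij_witness[of _ "\<lambda>y. y / x" "\<lambda>y. x * y"]) auto
  finally have "x ^ card ?U = 1"
    by (metis (no_types, lifting) DiffD2 finite insertI1 mult_cancel_right1 prod_zero_iff)
  moreover have "CARD('a) = Suc (card ?U)"
    using finite_UNIV_card_ge_0[where ?'a = 'a] by (simp add: card_Diff_singleton)
  ultimately show ?thesis by (metis power_Suc mult.right_neutral)
qed (simp add: finite_UNIV_card_ge_0)

lemma power_add_power_less: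
  fixes q h :: nat
  assumes "2 \<le> q" "2 \<le> h"
  shows "q ^ (h - 1) + q ^ (h - 2) < q ^ h"
proof -
  obtain j where h: "h = j + 2" using assms(2) by (metis add.commute le_Suc_ex)
  have "q + 1 < q * q" using assms(1) mult_le_mono1[of 2 q q] by linarith
  then have "(q + 1) * q ^ j < (q * q) * q ^ j"
    using assms(1) by (intro mult_strict_right_mono) simp_all
  then show ?thesis by (simp add: h algebra_simps)
qed

locale trace_plane =
  fixes q h :: nat and field_type :: "'a::{field,finite} itself"
  assumes prime_power_q: "prime_power q" and two_le_h: "2 \<le> h" and card_field: "CARD('a) = q ^ h"
begin

abbreviation Fq :: "'a set" where "Fq \<equiv> {y. y ^ q = y}"

abbreviation Tr :: "'a \<Rightarrow> 'a" where "Tr \<equiv> rel_trace q h"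

abbreviation T :: "('a^3) set set" where "T \<equiv> trace_blocking_set q h"

lemma q_eq_CHAR_power:
  obtains k where "1 \<le> k" "q = CHAR('a) ^ k"
proof -
  obtain p k where p: "prime p" "1 \<le> k" "q = p ^ k"
    using prime_power_q by (auto simp: prime_power_def)
  have "CARD('a) = p ^ (k * h)" using card_field p(3) by (simp add: power_mult)
  then have "CHAR('a) dvd p ^ (k * h)" using of_nat_CARD_eq_0 of_nat_eq_0_iff_char_dvd by metis
  then have "CHAR('a) dvd p" using prime_CHAR_finite_field prime_dvd_power by blast
  then have "CHAR('a) = p" using prime_CHAR_finite_field p(1) primes_dvd_imp_eq by blast
  with p that show thesis by simp
qed

lemma two_le_q: "2 \<le> q"
proof -
  obtain k where k: "1 \<le> k" "q = CHAR('a) ^ k" by (rule q_eq_CHAR_power)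
  have "CHAR('a) ^ 1 \<le> CHAR('a) ^ k"
    using k prime_gt_0_nat[OF prime_CHAR_finite_field[where ?'a = 'a]]
    by (intro power_increasing) auto
  with k(2) prime_ge_2_nat[OF prime_CHAR_finite_field[where ?'a = 'a]] show ?thesis by simp
qed

lemma power_q_power_add: "(x + y) ^ (q ^ i) = x ^ (q ^ i) + y ^ (q ^ i)" for x y :: 'a
proof -
  obtain k where "q = CHAR('a) ^ k" by (rule q_eq_CHAR_power)
  then show ?thesis
    by (intro freshmans_dream'[where n = "k * i"])
       (simp_all add: prime_CHAR_finite_field power_mult)
qed

lemma sum_power_q_power: "(sum f A) ^ (q ^ i) = (\<Sum>j\<in>A. f j ^ (q ^ i))" for f :: "'b \<Rightarrow> 'a"
proof -
  obtain k where "q = CHAR('a) ^ k" by (rule q_eq_CHAR_power)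
  then show ?thesis
    by (intro freshmans_dream_sum'[where n = "k * i"])
       (simp_all add: prime_CHAR_finite_field power_mult)
qed

lemma Fq_add: "s \<in> Fq \<Longrightarrow> t \<in> Fq \<Longrightarrow> s + t \<in> Fq"
  using power_q_power_add[of s t 1] by simp

lemma Fq_mult: "s \<in> Fq \<Longrightarrow> t \<in> Fq \<Longrightarrow> s * t \<in> Fq"
  by (simp add: power_mult_distrib)

lemma Fq_inverse: "t \<in> Fq \<Longrightarrow> inverse t \<in> Fq"
  by (simp add: power_inverse)

lemma power_q_power_Fq: "t \<in> Fq \<Longrightarrow> t ^ (q ^ i) = t"
proof (induction i)
  case (Suc i)
  have "t ^ (q ^ Suc i) = (t ^ (q ^ i)) ^ q" by (simp only: power_Suc2 power_mult)
  with Suc show ?case by simp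
qed simp

lemma Tr_add: "Tr (x + y) = Tr x + Tr y"
  by (simp add: rel_trace_def power_q_power_add sum.distrib)

lemma Tr_0: "Tr 0 = 0"
  using two_le_q by (simp add: rel_trace_def power_0_left)

lemma Tr_diff: "Tr (x - y) = Tr x - Tr y"
  using Tr_add[of "x - y" y] by (simp add: algebra_simps)

lemma Tr_mult_Fq: "t \<in> Fq \<Longrightarrow> Tr (t * x) = t * Tr x"
  by (simp add: rel_trace_def power_mult_distrib power_q_power_Fq sum_distrib_left)

text \<open>The Frobenius map \<open>x \<mapsto> x\<^sup>q\<close> permutes the summands of the trace cyclically.\<close>

lemma Tr_in_Fq: "Tr x \<in> Fq"
proof -
  have "(Tr x) ^ q = (\<Sum>i<h. x ^ (q ^ Suc i))"
    using sum_power_q_power[of "\<lambda>i. x ^ (q ^ i)" "{..<h}" 1]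
    by (simp add: rel_trace_def power_mult[symmetric] mult.commute)
  moreover have "(\<Sum>i<Suc h. x ^ (q ^ i)) = x + (\<Sum>i<h. x ^ (q ^ Suc i))"
    using sum.lessThan_Suc_shift[of "\<lambda>i. x ^ (q ^ i)" h] by simp
  moreover have "(\<Sum>i<Suc h. x ^ (q ^ i)) = Tr x + x"
    using power_card_field_eq_self[of x] by (simp add: rel_trace_def card_field)
  ultimately show ?thesis by (simp add: add.commute)
qed

lemma card_Tr_fiber_le: "card {x. Tr x = c} \<le> q ^ (h - 1)"
proof -
  define p where "p = (\<Sum>i<h. monom (1::'a) (q ^ i)) - [:c:]"
  have "coeff p (q ^ (h - 1)) = (\<Sum>i<h. if q ^ i = q ^ (h - 1) then 1 else 0)"
    using two_le_q by (simp add: p_def coeff_sum coeff_pCons split: nat.split)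
  also have "\<dots> = (\<Sum>i\<in>{h - 1}. 1)"
    using two_le_h two_le_q by (intro sum.mono_neutral_cong_right) (auto simp: power_inject_exp)
  finally have "p \<noteq> 0" by auto
  have "degree p \<le> q ^ (h - 1)"
    unfolding p_def
  proof (intro degree_diff_le degree_sum_le)
    fix i assume "i \<in> {..<h}"
    then have "q ^ i \<le> q ^ (h - 1)" using two_le_q by (intro power_increasing) auto
    then show "degree (monom (1::'a) (q ^ i)) \<le> q ^ (h - 1)" using degree_monom_le le_trans by blast
  qed simp_all
  moreover have "{x. Tr x = c} = {x. poly p x = 0}"
    by (simp add: p_def poly_sum poly_monom rel_trace_def)
  ultimately show ?thesis using card_poly_roots_bound[OF \<open>p \<noteq> 0\<close>] by simp
qed

lemma card_Fq: "card Fq = q"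
proof (rule antisym)
  define p where "p = monom (1::'a) q - monom 1 1"
  have "coeff p q = 1" using two_le_q by (simp add: p_def)
  then have "p \<noteq> 0" by auto
  moreover have "degree p \<le> q" unfolding p_def using two_le_q
    by (intro degree_diff_le) (auto intro: le_trans[OF degree_monom_le])
  moreover have "Fq = {x. poly p x = 0}" by (simp add: p_def poly_monom)
  ultimately show "card Fq \<le> q" using card_poly_roots_bound[of p] by simp
next
  have "q * q ^ (h - 1) = card (UNIV :: 'a set)"
    using two_le_h card_field by (simp flip: power_Suc)
  also have "\<dots> \<le> (\<Sum>c\<in>Fq. card {x::'a. Tr x = c})"
    using card_UN_le[of Fq "\<lambda>c. {x. Tr x = c}"] Tr_in_Fq
    by (metis (mono_tags, lifting) UNIV_eq_I UN_iff finite mem_Collect_eq)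
  also have "\<dots> \<le> (\<Sum>c\<in>Fq. q ^ (h - 1))"
    by (intro sum_mono card_Tr_fiber_le)
  also have "\<dots> = card Fq * q ^ (h - 1)" by simp
  finally show "q \<le> card Fq" using two_le_q by simp
qed

definition trace_vectors :: "('a^3) set" where
  "trace_vectors = {vector [x, Tr x, y] | x y. y \<in> Fq}"

lemma trace_blocking_set_eq: "T = {pg_point u | u. u \<in> trace_vectors \<and> u \<noteq> 0}"
proof (intro equalityI subsetI)
  fix P assume "P \<in> T"
  then obtain x y where xy: "P = pg_point (vector [x, Tr x, y])" "y \<in> Fq" "(x, y) \<noteq> (0, 0)"
    unfolding trace_blocking_set_def by auto
  then have "vector [x, Tr x, y] \<in> trace_vectors" "vector [x, Tr x, y] \<noteq> (0::'a^3)"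
    by (auto simp: trace_vectors_def vec3_eq_0_iff)
  with xy(1) show "P \<in> {pg_point u | u. u \<in> trace_vectors \<and> u \<noteq> 0}" by blast
next
  fix P assume "P \<in> {pg_point u | u. u \<in> trace_vectors \<and> u \<noteq> 0}"
  then obtain x y where xy: "P = pg_point (vector [x, Tr x, y])" "y \<in> Fq"
    "vector [x, Tr x, y] \<noteq> (0::'a^3)"
    unfolding trace_vectors_def by auto
  then have "(x, y) \<noteq> (0, 0)" by (auto simp: vec3_eq_0_iff Tr_0)
  with xy show "P \<in> T" unfolding trace_blocking_set_def by blast
qed

lemma trace_vectors_add:
  assumes "u \<in> trace_vectors" "w \<in> trace_vectors"
  shows "u + w \<in> trace_vectors"
proof -
  obtain x y where u: "u = vector [x, Tr x, y]" "y \<in> Fq"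
    using assms(1) unfolding trace_vectors_def by blast
  obtain x' y' where w: "w = vector [x', Tr x', y']" "y' \<in> Fq"
    using assms(2) unfolding trace_vectors_def by blast
  have "u + w = vector [x + x', Tr (x + x'), y + y']" using u w by (simp add: vec3_eq_iff Tr_add)
  with Fq_add[OF u(2) w(2)] show ?thesis unfolding trace_vectors_def by blast
qed

lemma trace_vectors_smult:
  assumes "t \<in> Fq" "u \<in> trace_vectors"
  shows "t *s u \<in> trace_vectors"
proof -
  obtain x y where u: "u = vector [x, Tr x, y]" "y \<in> Fq"
    using assms(2) unfolding trace_vectors_def by blast
  have "t *s u = vector [t * x, Tr (t * x), t * y]"
    using u assms(1) by (simp add: vec3_eq_iff Tr_mult_Fq)
  with Fq_mult[OF assms(1) u(2)] show ?thesis unfolding trace_vectors_def by blast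
qed

lemma card_secant_T_ge: "l \<in> secants T \<Longrightarrow> q + 1 \<le> card (l \<inter> T)"
  using card_secant_linear_set_ge[OF trace_vectors_add trace_vectors_smult, of Fq l]
  by (simp add: trace_blocking_set_eq card_Fq)

definition T_aff :: "('a^3) set set" where
  "T_aff = range (\<lambda>x. pg_point (vector [x, Tr x, 1]))"

definition T_inf :: "('a^3) set set" where
  "T_inf = insert (pg_point (vector [1, 0, 0])) ((\<lambda>d. pg_point (vector [d, 1, 0])) ` {d. Tr d = 1})"

abbreviation line_at_infinity :: "('a^3) set set" where
  "line_at_infinity \<equiv> pg_line (vector [0, 0, 1])"

lemma point_at_infinity_in_T_inf:
  assumes "x \<noteq> 0"
  shows "pg_point (vector [x, Tr x, 0]) \<in> T_inf"
proof (cases "Tr x = 0")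
  case True
  then have "vector [x, Tr x, 0] = x *s (vector [1, 0, 0] :: 'a^3)" by (simp add: vec3_eq_iff)
  with assms show ?thesis by (simp add: T_inf_def pg_point_smult)
next
  case False
  have "Tr (x / Tr x) = 1"
    using False Tr_mult_Fq[OF Fq_inverse[OF Tr_in_Fq[of x]], of x]
    by (simp add: divide_inverse mult.commute)
  moreover have "vector [x, Tr x, 0] = Tr x *s (vector [x / Tr x, 1, 0] :: 'a^3)"
    using False by (simp add: vec3_eq_iff)
  ultimately show ?thesis using False by (auto simp: T_inf_def pg_point_smult)
qed

lemma T_subset: "T \<subseteq> T_aff \<union> T_inf"
proof
  fix P assume "P \<in> T"
  then obtain x y where xy: "P = pg_point (vector [x, Tr x, y])" "y \<in> Fq" "(x, y) \<noteq> (0, 0)"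
    unfolding trace_blocking_set_def by auto
  show "P \<in> T_aff \<union> T_inf"
  proof (cases "y = 0")
    case True
    with xy show ?thesis using point_at_infinity_in_T_inf by simp
  next
    case False
    have "Tr (x / y) = Tr x / y"
      using Tr_mult_Fq[OF Fq_inverse[OF xy(2)], of x] by (simp add: divide_inverse mult.commute)
    then have "vector [x, Tr x, y] = y *s (vector [x / y, Tr (x / y), 1] :: 'a^3)"
      using False by (simp add: vec3_eq_iff)
    with xy(1) False show ?thesis by (auto simp: T_aff_def pg_point_smult)
  qed
qed

lemma T_cases:
  assumes "R \<in> T"
  obtains "R \<in> T_inf" | c where "R = pg_point (vector [c, Tr c, 1])"
  using assms T_subset unfolding T_aff_def by blast

lemma T_infE:
  assumes "I \<in> T_inf"
  obtains w where "w \<noteq> 0" "w $ 3 = 0" "I = pg_point w"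
proof -
  from assms consider "I = pg_point (vector [1, 0, 0])" | d where "I = pg_point (vector [d, 1, 0])"
    unfolding T_inf_def by blast
  then show thesis by cases (rule that; simp add: vec3_eq_0_iff)+
qed

lemma affine_point_notin_T_inf: "pg_point (vector [b, c, 1]) \<notin> T_inf"
proof
  assume "pg_point (vector [b, c, 1]) \<in> T_inf"
  then obtain w where "w $ 3 = 0" "pg_point (vector [b, c, 1]) = pg_point w" by (rule T_infE)
  then show False by (auto simp: pg_point_eq_iff vec3_eq_0_iff vec3_eq_iff)
qed

lemma T_inf_subset_line_at_infinity: "T_inf \<subseteq> line_at_infinity"
  by (auto elim!: T_infE simp: pg_point_in_pg_line_iff scalar_product_3)

lemma secant_T_inf_eq_line_at_infinity:
  assumes "P \<in> T_inf" "l \<in> pencil P" "R \<in> l" "R \<in> T_inf" "R \<noteq> P"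
  shows "l = line_at_infinity"
  using assms T_inf_subset_line_at_infinity
  by (intro pg_line_unique[of _ _ P R]) (auto simp: pencil_def vec3_eq_0_iff pg_line_in_pg_lines)

lemma card_T_inf: "card T_inf \<le> q ^ (h - 1) + 1"
proof -
  have "card T_inf \<le> card ((\<lambda>d. pg_point (vector [d, 1, 0])) ` {d::'a. Tr d = 1}) + 1"
    unfolding T_inf_def by (simp add: card_insert_if)
  also have "\<dots> \<le> card {d::'a. Tr d = 1} + 1" by (simp add: card_image_le)
  also have "\<dots> \<le> q ^ (h - 1) + 1" using card_Tr_fiber_le by simp
  finally show ?thesis .
qed

lemma card_T: "card T \<le> CARD('a) + q ^ (h - 1) + 1"
proof -
  have "card T \<le> card T_aff + card T_inf"
    using card_mono[OF finite T_subset] card_Un_le[of T_aff T_inf] by linarith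
  moreover have "card T_aff \<le> CARD('a)" unfolding T_aff_def by (rule card_image_le) simp
  ultimately show ?thesis using card_T_inf by simp
qed

text \<open>In each of the three lemmas below, a secant \<open>l\<close> through \<open>P\<close> either is the line at
  infinity or contains an affine point \<open>R = \<langle>(c, Tr c, 1)\<rangle>\<close> of \<open>T\<close>; a suitable combination of
  \<open>R\<close> and \<open>P\<close> then lies on \<open>l\<close> in a small set \<open>X\<close> of points, and \<open>l\<close> is the line joining \<open>P\<close>
  to that point.\<close>

lemma card_secants_through_affine_point:
  assumes P: "P = pg_point (vector [b, Tr b, 1])"
  shows "card (pencil P \<inter> secants T) \<le> q ^ (h - 1) + 1"
proof -
  have "pencil P \<inter> secants T \<subseteq> {l \<in> pencil P. \<exists>R\<in>T_inf. R \<in> l \<and> R \<noteq> P}"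
  proof
    fix l assume l: "l \<in> pencil P \<inter> secants T"
    then obtain R where R: "R \<in> l" "R \<in> T" "R \<noteq> P" by (meson IntD2 secant_other_point)
    from R(2) show "l \<in> {l \<in> pencil P. \<exists>R\<in>T_inf. R \<in> l \<and> R \<noteq> P}"
    proof (cases rule: T_cases)
      case 1
      with l R show ?thesis by blast
    next
      case (2 c)
      let ?u = "vector [c, Tr c, 1] + (- 1) *s vector [b, Tr b, 1] :: 'a^3"
      have u: "?u = vector [c - b, Tr (c - b), 0]" by (simp add: vec3_eq_iff Tr_diff)
      have "c \<noteq> b" using 2 R(3) P by auto
      then have "?u \<noteq> 0" "pg_point ?u \<in> T_inf"
        using u point_at_infinity_in_T_inf[of "c - b"] by (simp_all add: vec3_eq_0_iff)
      moreover have "pg_point ?u \<in> l"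
        using l R(1) 2 P \<open>?u \<noteq> 0\<close>
        by (intro pg_point_add_smult_in_pg_line) (auto simp: pencil_def vec3_eq_0_iff)
      moreover have "pg_point ?u \<noteq> P" using \<open>pg_point ?u \<in> T_inf\<close> P affine_point_notin_T_inf by auto
      ultimately show ?thesis using l by blast
    qed
  qed
  then have "card (pencil P \<inter> secants T) \<le> card {l \<in> pencil P. \<exists>R\<in>T_inf. R \<in> l \<and> R \<noteq> P}"
    by (simp add: card_mono)
  also have "\<dots> \<le> card T_inf" by (rule card_pencil_meeting_le)
  finally show ?thesis using card_T_inf by simp
qed

lemma card_secants_through_point_100:
  assumes P: "P = pg_point (vector [1, 0, 0])"
  shows "card (pencil P \<inter> secants T) \<le> q + 1"
proof -
  let ?X = "(\<lambda>t. pg_point (vector [0, t, 1])) ` Fq"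
  have "pencil P \<inter> secants T \<subseteq> insert line_at_infinity {l \<in> pencil P. \<exists>R\<in>?X. R \<in> l \<and> R \<noteq> P}"
  proof
    fix l assume l: "l \<in> pencil P \<inter> secants T"
    then obtain R where R: "R \<in> l" "R \<in> T" "R \<noteq> P" by (meson IntD2 secant_other_point)
    from R(2) show "l \<in> insert line_at_infinity {l \<in> pencil P. \<exists>R\<in>?X. R \<in> l \<and> R \<noteq> P}"
    proof (cases rule: T_cases)
      case 1
      have "P \<in> T_inf" using P by (simp add: T_inf_def)
      with 1 l R show ?thesis using secant_T_inf_eq_line_at_infinity by blast
    next
      case (2 c)
      let ?u = "vector [c, Tr c, 1] + (- c) *s vector [1, 0, 0] :: 'a^3"
      have u: "?u = vector [0, Tr c, 1]" by (simp add: vec3_eq_iff)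
      then have "?u \<noteq> 0" "pg_point ?u \<in> ?X" using Tr_in_Fq by (auto simp: vec3_eq_0_iff)
      moreover have "pg_point ?u \<in> l"
        using l R(1) 2 P \<open>?u \<noteq> 0\<close>
        by (intro pg_point_add_smult_in_pg_line) (auto simp: pencil_def vec3_eq_0_iff)
      moreover have "pg_point ?u \<noteq> P"
        using u P affine_point_notin_T_inf[of 0 "Tr c"] by (auto simp: T_inf_def)
      ultimately show ?thesis using l by blast
    qed
  qed
  then have "card (pencil P \<inter> secants T) \<le> card ?X + 1"
    by (rule card_subset_insert_pencil_meeting_le)
  also have "\<dots> \<le> card Fq + 1" using card_image_le[OF finite] by (simp only: add_le_cancel_right)
  finally show ?thesis by (simp add: card_Fq)
qed

lemma card_secants_through_point_d10:
  assumes d: "Tr d = 1" and P: "P = pg_point (vector [d, 1, 0])"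
  shows "card (pencil P \<inter> secants T) \<le> q ^ (h - 1) + 1"
proof -
  let ?X = "(\<lambda>t. pg_point (vector [t, 0, 1])) ` {t. Tr t = 0}"
  have "pencil P \<inter> secants T \<subseteq> insert line_at_infinity {l \<in> pencil P. \<exists>R\<in>?X. R \<in> l \<and> R \<noteq> P}"
  proof
    fix l assume l: "l \<in> pencil P \<inter> secants T"
    then obtain R where R: "R \<in> l" "R \<in> T" "R \<noteq> P" by (meson IntD2 secant_other_point)
    from R(2) show "l \<in> insert line_at_infinity {l \<in> pencil P. \<exists>R\<in>?X. R \<in> l \<and> R \<noteq> P}"
    proof (cases rule: T_cases)
      case 1
      have "P \<in> T_inf" using P d by (simp add: T_inf_def)
      with 1 l R show ?thesis using secant_T_inf_eq_line_at_infinity by blast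
    next
      case (2 c)
      let ?u = "vector [c, Tr c, 1] + (- Tr c) *s vector [d, 1, 0] :: 'a^3"
      have u: "?u = vector [c - Tr c * d, 0, 1]" by (simp add: vec3_eq_iff)
      have "Tr (c - Tr c * d) = 0"
        using d Tr_mult_Fq[OF Tr_in_Fq[of c], of d] by (simp add: Tr_diff)
      then have "?u \<noteq> 0" "pg_point ?u \<in> ?X" using u by (auto simp: vec3_eq_0_iff)
      moreover have "pg_point ?u \<in> l"
        using l R(1) 2 P \<open>?u \<noteq> 0\<close>
        by (intro pg_point_add_smult_in_pg_line) (auto simp: pencil_def vec3_eq_0_iff)
      moreover have "pg_point ?u \<noteq> P"
        using u P d affine_point_notin_T_inf[of "c - Tr c * d" 0] by (auto simp: T_inf_def)
      ultimately show ?thesis using l by blast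
    qed
  qed
  then have "card (pencil P \<inter> secants T) \<le> card ?X + 1"
    by (rule card_subset_insert_pencil_meeting_le)
  also have "\<dots> \<le> card {t::'a. Tr t = 0} + 1"
    using card_image_le[OF finite] by (simp only: add_le_cancel_right)
  finally show ?thesis using card_Tr_fiber_le[of 0] by simp
qed

lemma card_pencil_Int_secants_T_le:
  assumes "P \<in> T"
  shows "card (pencil P \<inter> secants T) \<le> q ^ (h - 1) + 1"
proof -
  have "q ^ 1 \<le> q ^ (h - 1)" using two_le_q two_le_h by (intro power_increasing) auto
  moreover consider b where "P = pg_point (vector [b, Tr b, 1])" | "P = pg_point (vector [1, 0, 0])"
    | d where "Tr d = 1" "P = pg_point (vector [d, 1, 0])"
    using T_subset assms unfolding T_aff_def T_inf_def by blast
  ultimately show ?thesis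
    using card_secants_through_affine_point card_secants_through_point_100
      card_secants_through_point_d10 by cases fastforce+
qed

lemma trace_like_T: "trace_like q (q ^ (h - 1)) T"
  unfolding trace_like_def
  using card_T card_secant_T_ge card_pencil_Int_secants_T_le
  by (auto simp: trace_blocking_set_eq intro: pg_point_in_pg_points)

end

theorem proposition2p11:
  fixes L1 L2 :: "('a::{field,finite} ^ 3) set set"
    and q h :: nat
  assumes "prime_power q"
    and "h \<ge> 2"
    and "CARD('a) = q ^ h"
    and "blocking_set L1" and "blocking_set L2"
    and "L1 \<inter> L2 = {}"
    and "proj_equivalent L1 (trace_blocking_set q h)"
    and "proj_equivalent L2 (trace_blocking_set q h)"
  shows "(\<forall>P\<in>L1 \<union> L2.
           card {l \<in> pg_lines. P \<in> l \<and> card (l \<inter> (L1 \<union> L2)) = 2}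
             \<ge> q ^ h - q ^ (h - 1) - q ^ (h - 2))
         \<and> minimal_double_blocking_set (L1 \<union> L2)"
proof -
  interpret trace_plane q h "TYPE('a)" by unfold_locales (use assms(1-3) in auto)
  obtain j where "h = j + 2" using assms(2) by (metis add.commute le_Suc_ex)
  then have q_power: "q ^ (h - 1) = q * q ^ (h - 2)" by simp
  have like: "trace_like q (q * q ^ (h - 2)) L" if "proj_equivalent L T" for L
    using that trace_like_projectivity_image trace_like_T q_power
    by (auto simp: proj_equivalent_def)
  have two_point_lines: "q ^ h - q ^ (h - 1) - q ^ (h - 2) \<le>
      card {l \<in> pencil P. card (l \<inter> (L1 \<union> L2)) = 2}" if "P \<in> L1 \<union> L2" for P
    using card_two_point_lines_Un_ge[OF assms(4) like[OF assms(7)] assms(5) like[OF assms(8)]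
        assms(6) that] two_le_q assms(3) q_power by simp
  have "0 < q ^ h - q ^ (h - 1) - q ^ (h - 2)"
    using power_add_power_less[OF two_le_q assms(2)] by simp
  then have "\<exists>l\<in>pencil P. card (l \<inter> (L1 \<union> L2)) = 2" if "P \<in> L1 \<union> L2" for P
    using two_point_lines[OF that]
    by (cases "{l \<in> pencil P. card (l \<inter> (L1 \<union> L2)) = 2} = {}") auto
  then have "minimal_double_blocking_set (L1 \<union> L2)"
    by (intro minimal_double_blocking_setI double_blocking_set_Un assms(4-6))
  with two_point_lines show ?thesis by (simp add: pencil_def conj_assoc)
qed

end
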